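(* There exist at least two inequivalent extremal Type~II $\mathbb{Z}_4$-codes of length $40$ whose residue codes have dimension $7$.
   Context: A $\mathbb{Z}_4$-code of length $n$ is a $\mathbb{Z}_4$-submodule of $\mathbb{Z}_4^n$; it is self-dual if it equals its dual with respect to $x\cdot y=\sum x_iy_i \pmod 4$. The Euclidean weight of $x$ is $n_1(x)+4n_2(x)+n_3(x)$, $n_\alpha(x)$ being the number of coordinates equal to $\alpha$. A Type~II $\mathbb{Z}_4$-code is a self-dual code all of whose codewords have Euclidean weight divisible by $8$; it is extremal if its minimum Euclidean weight equals $8\lfloor n/24\rfloor+8$ (so $16$ for $n=40$). The residue code is $C^{(1)}=\{c\bmod 2: c\in C\}$. Two $\mathbb{Z}_4$-codes are equivalent if one can be obtained from the other by permuting coordinates and changing the signs of some coordinates. *)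

theory Defs
  imports "HOL-Analysis.Finite_Cartesian_Product" "HOL-Library.Numeral_Type"
begin

text \<open>Vectors of length n over Z4 are elements of type 4^'n (the numeral type 4 is the
ring of integers mod 4); the length is CARD('n).\<close>

definition z4_inner :: "4^'n::finite \<Rightarrow> 4^'n \<Rightarrow> 4" where
  "z4_inner x y = (\<Sum>i\<in>UNIV. x$i * y$i)"

definition z4_code :: "(4^'n::finite) set \<Rightarrow> bool" where
  "z4_code C \<longleftrightarrow> 0 \<in> C \<and> (\<forall>x\<in>C. \<forall>y\<in>C. x + y \<in> C) \<and> (\<forall>c::4. \<forall>x\<in>C. c *s x \<in> C)"

definition z4_dual :: "(4^'n::finite) set \<Rightarrow> (4^'n) set" where
  "z4_dual C = {x. \<forall>y\<in>C. z4_inner x y = 0}"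

definition self_dual :: "(4^'n::finite) set \<Rightarrow> bool" where
  "self_dual C \<longleftrightarrow> z4_code C \<and> C = z4_dual C"

definition eucl_weight :: "4^'n::finite \<Rightarrow> nat" where
  "eucl_weight x = card {i. x$i = 1} + 4 * card {i. x$i = 2} + card {i. x$i = 3}"

definition type_II :: "(4^'n::finite) set \<Rightarrow> bool" where
  "type_II C \<longleftrightarrow> self_dual C \<and> (\<forall>x\<in>C. 8 dvd eucl_weight x)"

definition min_eucl_weight :: "(4^'n::finite) set \<Rightarrow> nat" where
  "min_eucl_weight C = Min (eucl_weight ` (C - {0}))"

definition extremal_type_II :: "(4^'n::finite) set \<Rightarrow> bool" where
  "extremal_type_II C \<longleftrightarrow> type_II C \<and>
     min_eucl_weight C = 8 * (CARD('n) div 24) + 8"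

definition red2 :: "4 \<Rightarrow> 2" where
  "red2 a = (if a = 0 \<or> a = 2 then 0 else 1)"

definition residue :: "(4^'n::finite) set \<Rightarrow> (2^'n) set" where
  "residue C = (\<lambda>x. \<chi> i. red2 (x$i)) ` C"

definition binary_dim :: "(2^'n::finite) set \<Rightarrow> nat" where
  "binary_dim D = (THE k. card D = 2 ^ k)"

definition z4_equivalent :: "(4^'n::finite) set \<Rightarrow> (4^'n) set \<Rightarrow> bool" where
  "z4_equivalent C D \<longleftrightarrow> (\<exists>\<sigma> s. bij (\<sigma>::'n \<Rightarrow> 'n) \<and> (\<forall>i. s i = (1::4) \<or> s i = -1) \<and>
      D = (\<lambda>x. \<chi> i. s i * x $ \<sigma> i) ` C)"

end

theory Submission
  imports Defs
begin

text \<open>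
  The codes come from a general construction (the locale z4_construction): for pairwise
  orthogonal vectors g_j in Z4^n of norm divisible by 8 whose reductions mod 2 are in
  systematic form and span a binary code R containing the all-ones word, the code
  C = {x. (x mod 2) \<in> R, x orthogonal to all g_j} is self-dual of Type II with residue R.
  Its nonzero words reduce either to a nonzero word of R or are twice a nonzero word of
  the binary dual of R; so if R has minimum weight 16 and no repeated columns, C has
  minimum Euclidean weight 16.  Equivalent codes have permutation-equivalent residue
  codes, so a permutation invariant of binary codes separates the two codes.  Finally,
  all hypotheses and the values of the invariant are checked by evaluating executable
  list functions on two explicit 7 x 40 generator matrices.
\<close>

section \<open>Arithmetic in Z4 and reduction mod 2\<close>

lemma rep4_of_int: "Rep_bit0 (of_int z :: 4) = z mod 4"
  using bit0.Rep_Abs_mod[of z, where 'a="2"] by (simp add: bit0.of_int_eq)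

lemma rep2_of_int: "Rep_bit0 (of_int z :: 2) = z mod 2"
  using bit0.Rep_Abs_mod[of z, where 'a="1"] by (simp add: bit0.of_int_eq)

lemma z4_cases: "(a::4) = 0 \<or> a = 1 \<or> a = 2 \<or> a = 3"
proof (induct a rule: bit0_induct)
  case (of_int z)
  then have "z = 0 \<or> z = 1 \<or> z = 2 \<or> z = 3" by auto
  then show ?case by auto
qed

lemma z2_cases: "(a::2) = 0 \<or> a = 1"
proof (induct a rule: bit0_induct)
  case (of_int z)
  then have "z = 0 \<or> z = 1" by auto
  then show ?case by auto
qed

lemma rep4_0: "Rep_bit0 (0::4) = 0" using rep4_of_int[of 0] by simp
lemma rep4_1: "Rep_bit0 (1::4) = 1" using rep4_of_int[of 1] by simp
lemma rep4_numeral: "Rep_bit0 (numeral w :: 4) = numeral w mod 4"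
  using rep4_of_int[of "numeral w"] by simp
lemmas rep4_simps = rep4_0 rep4_1 rep4_numeral

lemma of_int_rep4: "of_int (Rep_bit0 a) = (a::4)"
  using z4_cases[of a] by (auto simp: rep4_simps)

lemma of_int_4_eq: "(of_int z :: 4) = of_int c \<longleftrightarrow> z mod 4 = c mod 4"
  by (metis bit0.Rep_inject_sym rep4_of_int)

lemma of_int_eq_0_4: "(of_int z :: 4) = 0 \<longleftrightarrow> 4 dvd z"
  using of_int_4_eq[of z 0] by (simp add: dvd_eq_mod_eq_0)

lemma of_int_2: "(of_int z :: 2) = (if odd z then 1 else 0)"
proof -
  have "(of_int z :: 2) = 0 \<longleftrightarrow> even z"
    by (metis bit0.Rep_inject_sym bit0.Rep_0 rep2_of_int even_iff_mod_2_eq_zero)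
  then show ?thesis using z2_cases[of "of_int z"] by auto
qed

lemma of_nat_eq_0_2: "(of_nat n :: 2) = 0 \<longleftrightarrow> even n"
  using of_int_2[of "int n"] by simp

lemma red2_add: "red2 (a + b) = red2 a + red2 b"
  using z4_cases[of a] z4_cases[of b] by (auto simp: red2_def)

lemma red2_diff: "red2 (a - b) = red2 a + red2 b"
  using z4_cases[of a] z4_cases[of b] by (auto simp: red2_def)

lemma red2_mult: "red2 (a * b) = red2 a * red2 b"
  using z4_cases[of a] z4_cases[of b] by (auto simp: red2_def)

lemma red2_0 [simp]: "red2 0 = 0" by (simp add: red2_def)

lemma red2_2 [simp]: "red2 2 = 0" by (simp add: red2_def)

lemma red2_sum: "red2 (sum f S) = (\<Sum>i\<in>S. red2 (f i))"
  by (induct S rule: infinite_finite_induct) (auto simp: red2_add)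

lemma red2_1_iff: "red2 a = 1 \<longleftrightarrow> a = 1 \<or> a = 3"
  using z4_cases[of a] by (auto simp: red2_def)

lemma double_eq_0_iff: "2 * (a::4) = 0 \<longleftrightarrow> red2 a = 0"
  using z4_cases[of a] by (auto simp: red2_def)

lemma red2_of_int: "red2 (of_int z) = of_int z"
proof -
  have "z mod 4 = 0 \<or> z mod 4 = 1 \<or> z mod 4 = 2 \<or> z mod 4 = 3" by auto
  moreover have "(of_int z :: 4) = of_int (z mod 4)"
    by (metis of_int_rep4 rep4_of_int)
  moreover have "(of_int z :: 2) = of_int (z mod 2)"
    by (metis of_int_2 even_mod_2_iff)
  moreover have "z mod 2 = (z mod 4) mod 2" by (simp add: mod_mod_cancel)
  ultimately show ?thesis by (auto simp: red2_def)
qed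

definition lift2 :: "2 \<Rightarrow> 4" where "lift2 b = (if b = 1 then 1 else 0)"

lemma red2_lift2 [simp]: "red2 (lift2 b) = b"
  using z2_cases[of b] by (auto simp: lift2_def red2_def)

lemma z2_add_self: "(a::2) + a = 0"
  using z2_cases[of a] by auto

lemma vec2_add_self: "(r::2^'n::finite) + r = 0"
  using z2_add_self by (metis vec_eq_iff vector_add_component zero_index)

lemma z2_add_eq_0: "(a::2) + b = 0 \<longleftrightarrow> a = b"
  using z2_cases[of a] z2_cases[of b] by auto

section \<open>Vectors over Z4 and Z2\<close>

text \<open>The norm
  is congruent mod 8 to the Euclidean weight and is the quantity behind the Type II
  condition.\<close>
definition red :: "4^'n::finite \<Rightarrow> 2^'n" where "red x = (\<chi> i. red2 (x$i))"
definition inner2 :: "2^'n::finite \<Rightarrow> 2^'n \<Rightarrow> 2" where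
  "inner2 u v = (\<Sum>i\<in>UNIV. u$i * v$i)"
definition hwt :: "2^'n::finite \<Rightarrow> nat" where "hwt r = card {i. r$i = 1}"
definition norm4 :: "4^'n::finite \<Rightarrow> int" where "norm4 x = (\<Sum>i\<in>UNIV. (Rep_bit0 (x$i))^2)"

lemma red_add: "red (x + y) = red x + red y"
  by (simp add: red_def vec_eq_iff red2_add)

lemma red_diff: "red (x - y) = red x + red y"
  by (simp add: red_def vec_eq_iff red2_diff)

lemma red_scale: "red (c *s x) = red2 c *s red x"
  by (simp add: red_def vec_eq_iff red2_mult)

lemma red_zero [simp]: "red 0 = 0"
  by (simp add: red_def vec_eq_iff)

lemma red_sum: "red (sum f S) = (\<Sum>j\<in>S. red (f j))"
  by (induct S rule: infinite_finite_induct) (auto simp: red_add)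

lemma red_double: "red (2 *s x) = 0"
  by (simp add: red_def vec_eq_iff red2_mult)

lemma inner_comm: "z4_inner x y = z4_inner y x"
  by (simp add: z4_inner_def mult.commute)

lemma inner_add_left: "z4_inner (y + z) x = z4_inner y x + z4_inner z x"
  by (simp add: z4_inner_def distrib_right sum.distrib)

lemma inner_add_right: "z4_inner x (y + z) = z4_inner x y + z4_inner x z"
  by (simp add: z4_inner_def distrib_left sum.distrib)

lemma inner_diff_left: "z4_inner (y - z) x = z4_inner y x - z4_inner z x"
  by (simp add: z4_inner_def left_diff_distrib sum_subtractf)

lemma inner_scale_left: "z4_inner (c *s x) y = c * z4_inner x y"
  by (simp add: z4_inner_def sum_distrib_left algebra_simps)

lemma inner_scale_right: "z4_inner x (c *s y) = c * z4_inner x y"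
  by (simp add: z4_inner_def sum_distrib_left algebra_simps)

lemma inner_sum_right: "z4_inner x (sum f S) = (\<Sum>j\<in>S. z4_inner x (f j))"
  by (induct S rule: infinite_finite_induct)
    (auto simp: z4_inner_def distrib_left sum.distrib)

lemma red2_z4_inner: "red2 (z4_inner x y) = inner2 (red x) (red y)"
  by (simp add: z4_inner_def inner2_def red2_sum red2_mult red_def)

lemma inner2_comm: "inner2 u v = inner2 v u"
  by (simp add: inner2_def mult.commute)

lemma inner2_add_left: "inner2 (y + z) x = inner2 y x + inner2 z x"
  by (simp add: inner2_def distrib_right sum.distrib)

lemma inner2_add_right: "inner2 x (y + z) = inner2 x y + inner2 x z"
  by (simp add: inner2_def distrib_left sum.distrib)

lemma inner2_scale_left: "inner2 (c *s x) y = c * inner2 x y"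
  by (simp add: inner2_def sum_distrib_left algebra_simps)

lemma inner2_scale_right: "inner2 x (c *s y) = c * inner2 x y"
  by (simp add: inner2_def sum_distrib_left algebra_simps)

lemma inner2_sum_left: "inner2 (sum f S) x = (\<Sum>j\<in>S. inner2 (f j) x)"
  by (induct S rule: infinite_finite_induct)
    (auto simp: inner2_def distrib_right sum.distrib)

lemma inner2_sum_right: "inner2 x (sum f S) = (\<Sum>j\<in>S. inner2 x (f j))"
  by (induct S rule: infinite_finite_induct)
    (auto simp: inner2_def distrib_left sum.distrib)

definition unit2 :: "'n::finite \<Rightarrow> 2^'n" where "unit2 a = (\<chi> i. if i = a then 1 else 0)"

lemma inner2_unit: "inner2 (unit2 a) r = r $ a"
proof -
  have "inner2 (unit2 a) r = (\<Sum>i\<in>UNIV. if i = a then r $ i else 0)"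
    unfolding inner2_def unit2_def by (rule sum.cong) auto
  then show ?thesis by simp
qed

lemma inner2_support: "inner2 v r = (\<Sum>i\<in>{i. v$i = 1}. r$i)"
proof -
  have "inner2 v r = (\<Sum>i\<in>UNIV. if v$i = 1 then r$i else 0)"
    unfolding inner2_def
  proof (rule sum.cong)
    fix i show "v $ i * r $ i = (if v $ i = 1 then r $ i else 0)" using z2_cases[of "v$i"] by auto
  qed simp
  then show ?thesis by (simp add: sum.If_cases)
qed

lemma inner2_ones: "inner2 v (\<chi> i. 1) = of_nat (hwt v)"
proof -
  have "inner2 v (\<chi> i. 1) = (\<Sum>i\<in>{i. v$i = 1}. 1)" by (simp add: inner2_support)
  then show ?thesis by (simp add: hwt_def)
qed

lemma hwt_zero_iff: "hwt v = 0 \<longleftrightarrow> v = 0"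
proof
  assume "hwt v = 0"
  then have "{i. v$i = 1} = {}" by (simp add: hwt_def)
  then show "v = 0" using z2_cases by (auto simp: vec_eq_iff)
qed (simp add: hwt_def)

definition lift2v :: "2^'n::finite \<Rightarrow> 4^'n" where "lift2v v = (\<chi> i. lift2 (v$i))"
definition half_bits :: "4^'n::finite \<Rightarrow> 2^'n" where
  "half_bits x = (\<chi> i. if x$i = 2 then 1 else 0)"

lemma red_lift2v [simp]: "red (lift2v v) = v"
  by (simp add: red_def lift2v_def vec_eq_iff)

lemma lift2v_0 [simp]: "lift2v 0 = 0"
  by (simp add: lift2v_def lift2_def vec_eq_iff)

lemma red_zero_double: assumes "red x = 0" shows "x = 2 *s lift2v (half_bits x)"
  unfolding vec_eq_iff
proof
  fix i
  have "red2 (x$i) = 0" using assms by (simp add: red_def vec_eq_iff)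
  then have "x$i = 0 \<or> x$i = 2" using z4_cases[of "x$i"] by (auto simp: red2_def)
  then show "x $ i = (2 *s lift2v (half_bits x)) $ i"
    by (auto simp: half_bits_def lift2v_def lift2_def)
qed

lemma double_orth_iff: "z4_inner (2 *s lift2v v) y = 0 \<longleftrightarrow> inner2 v (red y) = 0"
  by (simp add: inner_scale_left double_eq_0_iff red2_z4_inner)

lemma norm4_double: "norm4 (2 *s lift2v v) = 4 * int (hwt v)"
proof -
  have pt: "(Rep_bit0 (2 * lift2v v $ i))^2 = 4 * (if v$i = 1 then 1 else 0)" for i
    using z2_cases[of "v$i"] by (auto simp: lift2v_def lift2_def rep4_simps)
  show ?thesis
    by (simp add: norm4_def pt sum_distrib_left[symmetric] sum.If_cases hwt_def)
qed

lemma norm4_eucl: "norm4 x = int (eucl_weight x) + 8 * int (card {i. x$i = 3})"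
proof -
  have pt: "(Rep_bit0 (x$i))^2 = (if x$i = 1 then 1 else 0) + 4 * (if x$i = 2 then 1 else 0)
      + (if x$i = 3 then 1 else 0) + 8 * (if x$i = 3 then 1 else 0)" for i
    using z4_cases[of "x$i"] by (auto simp: rep4_simps)
  have "norm4 x = (\<Sum>i\<in>UNIV. (if x$i = 1 then 1 else 0) + 4 * (if x$i = 2 then 1 else 0)
      + (if x$i = 3 then 1 else 0) + 8 * (if x$i = 3 then (1::int) else 0))"
    unfolding norm4_def by (rule sum.cong) (auto simp only: pt)
  also have "\<dots> = int (card {i. x$i = 1}) + 4 * int (card {i. x$i = 2}) + int (card {i. x$i = 3})
      + 8 * int (card {i. x$i = 3})"
    by (simp add: sum.distrib sum.If_cases sum_distrib_left[symmetric])
  finally show ?thesis by (simp add: eucl_weight_def)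
qed

lemma eucl_double: "eucl_weight (2 *s lift2v v) = 4 * hwt v"
proof -
  have "{i. (2 *s lift2v v)$i = (3::4)} = {}"
    using z2_cases by (auto simp: lift2v_def lift2_def)
  then have "int (eucl_weight (2 *s lift2v v)) = norm4 (2 *s lift2v v)"
    by (simp add: norm4_eucl)
  then show ?thesis by (simp add: norm4_double)
qed

text \<open>The norm is additive mod 8 on orthogonal pairs: the cross term 2 \<Sum> x_i y_i is
  twice a multiple of 4.\<close>
lemma norm4_add: "z4_inner x y = 0 \<Longrightarrow> norm4 (x + y) mod 8 = (norm4 x + norm4 y) mod 8"
proof -
  assume h: "z4_inner x y = 0"
  define B where "B = (\<Sum>i\<in>UNIV. Rep_bit0 (x$i) * Rep_bit0 (y$i))"
  have "of_int B = z4_inner x y"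
    by (simp add: B_def z4_inner_def of_int_rep4)
  then have "4 dvd B" using h of_int_eq_0_4 by metis
  have sq: "(Rep_bit0 (a + b::4))^2 mod 8 = (Rep_bit0 a + Rep_bit0 b)^2 mod 8" for a b
    using z4_cases[of a] z4_cases[of b] by (auto simp: rep4_simps)
  have "norm4 (x + y) mod 8 = (\<Sum>i\<in>UNIV. (Rep_bit0 (x$i + y$i))^2 mod 8) mod 8"
    by (simp add: norm4_def mod_sum_eq)
  also have "\<dots> = (\<Sum>i\<in>UNIV. (Rep_bit0 (x$i) + Rep_bit0 (y$i))^2 mod 8) mod 8"
    by (simp add: sq)
  also have "\<dots> = (\<Sum>i\<in>UNIV. (Rep_bit0 (x$i) + Rep_bit0 (y$i))^2) mod 8"
    by (simp add: mod_sum_eq)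
  also have "(\<Sum>i\<in>UNIV. (Rep_bit0 (x$i) + Rep_bit0 (y$i))^2) = norm4 x + norm4 y + 2 * B"
    by (simp add: norm4_def B_def power2_sum sum.distrib sum_distrib_left mult.assoc)
  finally have e: "norm4 (x + y) mod 8 = (norm4 x + norm4 y + 2 * B) mod 8" .
  from \<open>4 dvd B\<close> obtain k where "B = 4 * k" by (auto elim!: dvdE)
  then have "norm4 x + norm4 y + 2 * B = (norm4 x + norm4 y) + k * 8" by simp
  then show ?thesis using e by (metis mod_mult_self1)
qed

text \<open>Entries 1 and 3 each contribute 1 to both weights.\<close>
lemma hwt_red_le_eucl: "hwt (red x) \<le> eucl_weight x"
proof -
  have "{i. red x $ i = 1} = {i. x$i = 1} \<union> {i. x$i = 3}"
    by (auto simp: red_def red2_1_iff)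
  then have "hwt (red x) \<le> card {i. x$i = 1} + card {i. x$i = 3}"
    by (simp add: hwt_def card_Un_le)
  then show ?thesis by (simp add: eucl_weight_def)
qed

section \<open>A construction of Type II codes from a systematic generating set\<close>

locale z4_construction =
  fixes g :: "nat \<Rightarrow> 4^'n::finite" and k :: nat and p :: "nat \<Rightarrow> 'n"
  assumes gens_orth: "\<And>j m. j < k \<Longrightarrow> m < k \<Longrightarrow> z4_inner (g j) (g m) = 0"
    and gens_doubly_even: "\<And>j. j < k \<Longrightarrow> 8 dvd norm4 (g j)"
    and pivots: "\<And>j m. j < k \<Longrightarrow> m < k \<Longrightarrow> red (g j) $ p m = (if j = m then 1 else 0)"
    and ones_in_residue: "\<exists>b. (\<chi> i. 1) = (\<Sum>j<k. b j *s red (g j))"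
    and residue_weight:
      "\<And>b. (\<Sum>j<k. b j *s red (g j)) = 0 \<or> 16 \<le> hwt (\<Sum>j<k. b j *s red (g j))"
    and distinct_columns: "\<And>a c. a \<noteq> c \<Longrightarrow> \<exists>j<k. red (g j) $ a \<noteq> red (g j) $ c"
    and gen_weight_16: "\<exists>j<k. eucl_weight (g j) = 16"
begin

definition gen_res :: "nat \<Rightarrow> 2^'n" where "gen_res j = red (g j)"
definition comb :: "(nat \<Rightarrow> 2) \<Rightarrow> 2^'n" where "comb b = (\<Sum>j<k. b j *s gen_res j)"
definition Res :: "(2^'n) set" where "Res = range comb"
definition Res_perp :: "(2^'n) set" where "Res_perp = {v. \<forall>m<k. inner2 v (gen_res m) = 0}"
definition Code :: "(4^'n) set" where
  "Code = {x. red x \<in> Res \<and> (\<forall>j<k. z4_inner x (g j) = 0)}"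
definition lift_comb :: "(nat \<Rightarrow> 2) \<Rightarrow> 4^'n" where
  "lift_comb b = (\<Sum>j<k. lift2 (b j) *s g j)"

lemma comb_pivot: "m < k \<Longrightarrow> comb c $ p m = c m"
proof -
  assume m: "m < k"
  have "comb c $ p m = (\<Sum>j<k. c j * gen_res j $ p m)" by (simp add: comb_def sum_component)
  also have "\<dots> = (\<Sum>j<k. if j = m then c j else 0)"
    by (rule sum.cong) (auto simp: gen_res_def pivots m)
  finally show ?thesis using m by simp
qed

lemma Res_zero: "0 \<in> Res"
proof -
  have "comb (\<lambda>j. 0) = 0" by (simp add: comb_def)
  then show ?thesis unfolding Res_def by (metis rangeI)
qed

lemma Res_add: "r \<in> Res \<Longrightarrow> s \<in> Res \<Longrightarrow> r + s \<in> Res"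
proof -
  have "comb b + comb c = comb (\<lambda>j. b j + c j)" for b c
    by (simp add: comb_def sum.distrib[symmetric] vector_sadd_rdistrib)
  then show "r \<in> Res \<Longrightarrow> s \<in> Res \<Longrightarrow> r + s \<in> Res" by (auto simp: Res_def)
qed

lemma Res_scale: "r \<in> Res \<Longrightarrow> a *s r \<in> Res"
proof -
  have "a *s comb b = comb (\<lambda>j. a * b j)" for b
    by (simp add: comb_def vec_eq_iff sum_distrib_left mult.assoc)
  then show "r \<in> Res \<Longrightarrow> a *s r \<in> Res" by (auto simp: Res_def)
qed

lemma Res_perp_inner: assumes "r \<in> Res" "v \<in> Res_perp" shows "inner2 r v = 0"
proof -
  obtain b where r: "r = comb b" using assms(1) by (auto simp: Res_def)
  have "inner2 r v = (\<Sum>j<k. b j * inner2 (gen_res j) v)"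
    by (simp add: r comb_def inner2_sum_left inner2_scale_left)
  also have "\<dots> = 0" using assms(2) by (simp add: Res_perp_def inner2_comm[of _ v])
  finally show ?thesis .
qed

text \<open>For a word u orthogonal to the dual, subtract the
  combination agreeing with u at the pivots; the difference u' vanishes at the pivots,
  and testing it against the dual words e_q + \<Sum>_j (g_j)_q e_(p_j) shows u'_q = 0.\<close>
lemma Res_perp_perp: assumes u: "\<forall>v\<in>Res_perp. inner2 u v = 0" shows "u \<in> Res"
proof -
  define b where "b m = u $ p m" for m
  define u' where "u' = u + comb b"
  have u'_pivot: "u' $ p j = 0" if "j < k" for j
    by (simp only: u'_def vector_add_component comb_pivot[OF that] b_def z2_add_self)
  have "u' $ q = 0" for q
  proof -
    define vq where "vq = unit2 q + (\<Sum>j<k. (gen_res j $ q) *s unit2 (p j))"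
    have "inner2 vq (gen_res m) = 0" if m: "m < k" for m
    proof -
      have "inner2 vq (gen_res m) = gen_res m $ q + (\<Sum>j<k. gen_res j $ q * gen_res m $ p j)"
        by (simp add: vq_def inner2_add_left inner2_sum_left inner2_scale_left inner2_unit)
      also have "(\<Sum>j<k. gen_res j $ q * gen_res m $ p j) =
          (\<Sum>j<k. if j = m then gen_res m $ q else 0)"
        by (rule sum.cong) (auto simp: gen_res_def pivots m)
      finally show ?thesis using m by (simp add: z2_add_self)
    qed
    then have vq: "vq \<in> Res_perp" by (simp add: Res_perp_def)
    have "inner2 u vq = 0" using u vq by blast
    moreover have "inner2 (comb b) vq = 0" using Res_perp_inner[OF _ vq] by (simp add: Res_def)
    ultimately have "inner2 u' vq = 0" by (simp add: u'_def inner2_add_left)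
    moreover have "inner2 u' vq = u' $ q + (\<Sum>j<k. gen_res j $ q * u' $ p j)"
      by (simp add: vq_def inner2_add_right inner2_sum_right inner2_scale_right
          inner2_comm[of u'] inner2_unit)
    ultimately show ?thesis by (simp add: u'_pivot)
  qed
  then have "u' = 0" by (simp add: vec_eq_iff)
  have "u = u + (comb b + comb b)" by (simp add: vec2_add_self)
  also have "\<dots> = u' + comb b" by (simp add: u'_def add.assoc)
  also have "\<dots> = comb b" using \<open>u' = 0\<close> by simp
  finally show ?thesis by (simp add: Res_def)
qed

text \<open>Since the all-ones word lies in R, every dual word has even weight.\<close>
lemma Res_perp_even: "v \<in> Res_perp \<Longrightarrow> even (hwt v)"
proof -
  assume v: "v \<in> Res_perp"
  obtain b where "(\<chi> i. 1) = comb b" using ones_in_residue by (auto simp: comb_def gen_res_def)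
  then have "(\<chi> i. 1) \<in> Res" by (simp add: Res_def)
  then have "inner2 (\<chi> i. 1) v = 0" using Res_perp_inner v by blast
  then have "(of_nat (hwt v) :: 2) = 0" by (simp add: inner2_comm[of "\<chi> i. 1"] inner2_ones)
  then show ?thesis by (simp add: of_nat_eq_0_2)
qed

text \<open>A dual word of weight 2 would force two equal columns.\<close>
lemma Res_perp_not_weight_2: "v \<in> Res_perp \<Longrightarrow> hwt v \<noteq> 2"
proof
  assume v: "v \<in> Res_perp" and "hwt v = 2"
  then obtain a c where ac: "{i. v$i = 1} = {a, c}" "a \<noteq> c" by (auto simp: hwt_def card_2_iff)
  obtain j where j: "j < k" "red (g j) $ a \<noteq> red (g j) $ c" using distinct_columns[OF ac(2)] by blast
  have "inner2 v (gen_res j) = 0" using v j by (simp add: Res_perp_def)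
  then have "gen_res j $ a + gen_res j $ c = 0" using ac by (simp add: inner2_support)
  then show False using j by (simp add: z2_add_eq_0 gen_res_def)
qed

lemma red_lift_comb: "red (lift_comb b) = comb b"
  by (simp add: lift_comb_def comb_def red_sum red_scale gen_res_def)

lemma inner_lift_comb: "z4_inner x (lift_comb b) = (\<Sum>j<k. lift2 (b j) * z4_inner x (g j))"
  by (simp add: lift_comb_def inner_sum_right inner_scale_right)

lemma lift_comb_in_Code: "lift_comb b \<in> Code"
proof -
  have "z4_inner (lift_comb b) (g m) = 0" if "m < k" for m
    using that by (simp add: inner_comm[of "lift_comb b"] inner_lift_comb inner_comm[of "g m"] gens_orth)
  then show ?thesis by (auto simp: Code_def red_lift_comb Res_def)
qed

lemma gen_in_Code: "j < k \<Longrightarrow> g j \<in> Code"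
proof -
  assume j: "j < k"
  have "lift_comb (\<lambda>m. if m = j then 1 else 0) = (\<Sum>m<k. if m = j then g m else 0)"
    unfolding lift_comb_def by (rule sum.cong) (auto simp: lift2_def)
  also have "\<dots> = g j" using j by simp
  finally show ?thesis using lift_comb_in_Code by metis
qed

lemma double_in_Code_iff: "2 *s lift2v v \<in> Code \<longleftrightarrow> v \<in> Res_perp"
  by (simp add: Code_def red_double Res_zero double_orth_iff Res_perp_def gen_res_def)

lemma z4_code_Code: "z4_code Code"
  unfolding z4_code_def
proof (intro conjI ballI allI)
  show "0 \<in> Code" by (simp add: Code_def Res_zero z4_inner_def)
next
  fix x y assume "x \<in> Code" "y \<in> Code"
  then show "x + y \<in> Code" by (auto simp: Code_def red_add Res_add inner_add_left)
next
  fix c :: 4 and x assume "x \<in> Code"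
  then show "c *s x \<in> Code" by (auto simp: Code_def red_scale Res_scale inner_scale_left)
qed

lemma Code_diff: "x \<in> Code \<Longrightarrow> y \<in> Code \<Longrightarrow> x - y \<in> Code"
  by (auto simp: Code_def red_diff Res_add inner_diff_left)

lemma decompose:
  assumes x: "x \<in> Code" obtains b v where "v \<in> Res_perp" "x = lift_comb b + 2 *s lift2v v"
proof -
  from x obtain b where b: "red x = comb b" by (auto simp: Code_def Res_def)
  define v where "v = half_bits (x - lift_comb b)"
  have "red (x - lift_comb b) = 0" by (simp add: red_diff red_lift_comb b vec2_add_self)
  then have d: "x - lift_comb b = 2 *s lift2v v" unfolding v_def by (rule red_zero_double)
  have "2 *s lift2v v \<in> Code" using Code_diff[OF x lift_comb_in_Code[of b]] by (simp only: d)
  then have "v \<in> Res_perp" by (simp add: double_in_Code_iff)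
  moreover have "x = lift_comb b + 2 *s lift2v v" using d by (simp add: algebra_simps)
  ultimately show thesis by (rule that)
qed

lemma Code_orth: assumes x: "x \<in> Code" and y: "y \<in> Code" shows "z4_inner x y = 0"
proof -
  obtain b v where v: "v \<in> Res_perp" and ye: "y = lift_comb b + 2 *s lift2v v"
    using decompose[OF y] by blast
  have "z4_inner x (lift_comb b) = 0" using x by (simp add: inner_lift_comb Code_def)
  moreover have "inner2 v (red x) = 0"
    using Res_perp_inner[of "red x" v] v x by (simp add: Code_def inner2_comm)
  then have "z4_inner x (2 *s lift2v v) = 0" by (simp add: inner_comm[of x] double_orth_iff)
  ultimately show ?thesis using ye by (simp add: inner_add_right)
qed

lemma self_dual_Code: "self_dual Code"
  unfolding self_dual_def
proof (intro conjI z4_code_Code equalityI subsetI)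
  fix x assume "x \<in> Code"
  then show "x \<in> z4_dual Code" using Code_orth by (auto simp: z4_dual_def)
next
  fix x assume "x \<in> z4_dual Code"
  then have xo: "\<And>y. y \<in> Code \<Longrightarrow> z4_inner x y = 0" by (simp add: z4_dual_def)
  have "\<forall>v\<in>Res_perp. inner2 (red x) v = 0"
  proof
    fix v assume "v \<in> Res_perp"
    then have "z4_inner x (2 *s lift2v v) = 0" by (intro xo) (simp add: double_in_Code_iff)
    then show "inner2 (red x) v = 0" by (simp add: inner_comm[of x] double_orth_iff inner2_comm)
  qed
  then have "red x \<in> Res" by (rule Res_perp_perp)
  moreover have "\<forall>j<k. z4_inner x (g j) = 0" using xo gen_in_Code by blast
  ultimately show "x \<in> Code" by (simp add: Code_def)
qed

text \<open>Lifted combinations are sums of pairwise orthogonal doubly-even words of C, hence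
  doubly even by additivity of the norm.\<close>
lemma partial_lift_comb:
  "n \<le> k \<Longrightarrow> (\<Sum>j<n. lift2 (b j) *s g j) \<in> Code \<and> 8 dvd norm4 (\<Sum>j<n. lift2 (b j) *s g j)"
proof (induct n)
  case 0
  then show ?case by (simp add: Code_def Res_zero norm4_def rep4_simps z4_inner_def)
next
  case (Suc n)
  define s where "s = (\<Sum>j<n. lift2 (b j) *s g j)"
  define t where "t = lift2 (b n) *s g n"
  have s: "s \<in> Code" "8 dvd norm4 s" using Suc by (auto simp: s_def)
  have t: "t \<in> Code" using z4_code_Code gen_in_Code Suc by (auto simp: z4_code_def t_def)
  have "8 dvd norm4 t"
    using gens_doubly_even[of n] Suc z2_cases[of "b n"]
    by (auto simp: t_def lift2_def norm4_def rep4_simps)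
  then have "8 dvd norm4 s + norm4 t" using s(2) by (rule dvd_add[rotated])
  then have "8 dvd norm4 (s + t)"
    using norm4_add[OF Code_orth[OF s(1) t]] by (simp add: dvd_eq_mod_eq_0)
  moreover have "s + t \<in> Code" using s t z4_code_Code by (auto simp: z4_code_def)
  ultimately show ?case by (simp add: s_def t_def)
qed

lemma type_II_Code: "type_II Code"
  unfolding type_II_def
proof (intro conjI self_dual_Code ballI)
  fix x assume x: "x \<in> Code"
  obtain b v where v: "v \<in> Res_perp" and xe: "x = lift_comb b + 2 *s lift2v v"
    using decompose[OF x] by blast
  have "8 dvd norm4 (lift_comb b)" using partial_lift_comb[of k b] by (simp add: lift_comb_def)
  moreover have "8 dvd norm4 (2 *s lift2v v)"
    using Res_perp_even[OF v] by (auto simp: norm4_double elim!: evenE)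
  moreover have "norm4 x mod 8 = (norm4 (lift_comb b) + norm4 (2 *s lift2v v)) mod 8"
    using norm4_add[OF Code_orth[OF lift_comb_in_Code]] double_in_Code_iff v xe by simp
  ultimately have "8 dvd norm4 x" by (simp add: dvd_eq_mod_eq_0 mod_add_eq[symmetric])
  then show "8 dvd eucl_weight x" using norm4_eucl[of x] by presburger
qed

text \<open>Nonzero words of C have Euclidean weight at least 16: either their reduction is a
  nonzero word of R, or they are twice a nonzero dual word, which has even weight \<noteq> 2.\<close>
lemma Code_weight_ge_16: assumes x: "x \<in> Code" and nz: "x \<noteq> 0" shows "16 \<le> eucl_weight x"
proof (cases "red x = 0")
  case False
  from x obtain b where "red x = comb b" by (auto simp: Code_def Res_def)
  then have "16 \<le> hwt (red x)" using residue_weight[of b] False by (simp add: comb_def gen_res_def)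
  then show ?thesis using hwt_red_le_eucl[of x] by simp
next
  case True
  define v where "v = half_bits x"
  have xe: "x = 2 *s lift2v v" unfolding v_def using True by (rule red_zero_double)
  then have v: "v \<in> Res_perp" using x by (simp add: double_in_Code_iff)
  have "hwt v \<noteq> 0" using nz xe by (auto simp: hwt_zero_iff)
  then have "4 \<le> hwt v" using Res_perp_even[OF v] Res_perp_not_weight_2[OF v] by presburger
  then show ?thesis using xe eucl_double[of v] by simp
qed

lemma min_weight_Code: "min_eucl_weight Code = 16"
proof -
  obtain j where j: "j < k" "eucl_weight (g j) = 16" using gen_weight_16 by blast
  have "g j \<noteq> 0" using j(2) by (auto simp: eucl_weight_def)
  then have "16 \<in> eucl_weight ` (Code - {0})"
    using gen_in_Code[OF j(1)] j(2) by (metis DiffI image_eqI singletonD)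
  moreover have "\<forall>y\<in>eucl_weight ` (Code - {0}). 16 \<le> y" using Code_weight_ge_16 by auto
  ultimately show ?thesis unfolding min_eucl_weight_def by (intro Min_eqI) auto
qed

lemma residue_Code: "residue Code = Res"
proof
  show "residue Code \<subseteq> Res" by (auto simp: residue_def Code_def red_def[symmetric])
next
  show "Res \<subseteq> residue Code"
  proof
    fix r assume "r \<in> Res"
    then obtain b where "r = red (lift_comb b)" by (auto simp: Res_def red_lift_comb)
    then show "r \<in> residue Code" using lift_comb_in_Code by (auto simp: residue_def red_def)
  qed
qed

text \<open>By the pivots, distinct coefficient vectors give distinct combinations.\<close>
lemma card_Res: "card Res = 2 ^ k"
proof -
  let ?B = "PiE {..<k} (\<lambda>_. UNIV :: 2 set)"
  have "Res = comb ` ?B"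
  proof
    show "Res \<subseteq> comb ` ?B"
    proof
      fix r assume "r \<in> Res"
      then obtain b where r: "r = comb b" by (auto simp: Res_def)
      have "comb b = comb (restrict b {..<k})" by (simp add: comb_def)
      then show "r \<in> comb ` ?B" using r by auto
    qed
  qed (auto simp: Res_def)
  moreover have "inj_on comb ?B"
  proof (rule inj_onI)
    fix b c assume b: "b \<in> ?B" and c: "c \<in> ?B" and e: "comb b = comb c"
    have "b m = c m" if "m < k" for m using comb_pivot[of m b] comb_pivot[of m c] e that by simp
    then show "b = c" by (intro PiE_ext[OF b c]) simp
  qed
  ultimately have "card Res = card ?B" by (simp add: card_image)
  then show ?thesis by (simp add: card_PiE)
qed

lemma dim_residue_Code: "binary_dim (residue Code) = k"
  unfolding binary_dim_def residue_Code card_Res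
  by (rule the_equality) (auto simp: power_inject_exp)

lemma extremal_Code:
  assumes "24 \<le> CARD('n)" and "CARD('n) < 48" shows "extremal_type_II Code"
proof -
  have "CARD('n) div 24 = 1" using assms by (intro div_nat_eqI) simp_all
  then show ?thesis by (simp add: extremal_type_II_def type_II_Code min_weight_Code)
qed

end

section \<open>An invariant separating inequivalent codes\<close>

text \<open>Permuting coordinates of binary words.  Equivalent Z4-codes have residue codes that
  differ by a coordinate permutation, since the sign changes disappear mod 2.\<close>
definition permute2 :: "('n::finite \<Rightarrow> 'n) \<Rightarrow> 2^'n \<Rightarrow> 2^'n" where
  "permute2 \<sigma> r = (\<chi> i. r $ \<sigma> i)"

lemma residue_of_equivalent:
  assumes "z4_equivalent C D" shows "\<exists>\<sigma>. bij \<sigma> \<and> residue D = permute2 \<sigma> ` residue C"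
proof -
  from assms obtain \<sigma> s where b: "bij \<sigma>" and s: "\<forall>i. s i = (1::4) \<or> s i = -1"
    and D: "D = (\<lambda>x. \<chi> i. s i * x $ \<sigma> i) ` C" by (auto simp: z4_equivalent_def)
  have rs: "red2 (s i) = 1" for i using s[rule_format, of i] by (auto simp: red2_def)
  have "residue D = (\<lambda>x. \<chi> i. red2 (x $ \<sigma> i)) ` C"
    by (simp add: residue_def D image_image red2_mult rs)
  also have "\<dots> = permute2 \<sigma> ` residue C"
    by (simp add: residue_def permute2_def image_image)
  finally show ?thesis using b by blast
qed

lemma hwt_permute: assumes "bij \<sigma>" shows "hwt (permute2 \<sigma> r) = hwt r"
proof -
  have "\<sigma> ` {i. r $ \<sigma> i = 1} = {j. r $ j = 1}"
    using assms by (auto simp: bij_def)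
  moreover have "inj \<sigma>" using assms by (simp add: bij_def)
  ultimately have "card {i. r $ \<sigma> i = 1} = card {j. r $ j = 1}"
    by (metis card_image inj_on_subset subset_UNIV)
  then show ?thesis by (simp add: hwt_def permute2_def)
qed

lemma permute2_add: "permute2 \<sigma> (u + v) = permute2 \<sigma> u + permute2 \<sigma> v"
  by (simp add: permute2_def vec_eq_iff)

lemma permute2_inj: assumes "bij \<sigma>" shows "permute2 \<sigma> v = permute2 \<sigma> w \<longleftrightarrow> v = w"
proof
  assume e: "permute2 \<sigma> v = permute2 \<sigma> w"
  show "v = w" unfolding vec_eq_iff
  proof
    fix j
    obtain i where "j = \<sigma> i" using assms by (metis bij_def surj_def)
    then show "v $ j = w $ j" using e by (simp add: permute2_def vec_eq_iff)
  qed
qed simp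

text \<open>It is stated in terms of weights, sums and
  equality only, so it is preserved by coordinate permutations.\<close>
definition weight16_triple :: "(2^'n::finite) set \<Rightarrow> bool" where
  "weight16_triple R \<longleftrightarrow> (\<exists>u\<in>R. \<exists>v\<in>R. \<exists>w\<in>R. hwt u = 16 \<and> hwt v = 16 \<and> hwt w = 16 \<and>
     hwt (u + v) = 16 \<and> hwt (u + w) = 16 \<and> v \<noteq> w \<and> w \<noteq> u + v)"

lemma weight16_triple_permute:
  assumes b: "bij \<sigma>" and P: "weight16_triple R" shows "weight16_triple (permute2 \<sigma> ` R)"
proof -
  from P obtain u v w where uvw: "u \<in> R" "v \<in> R" "w \<in> R" "hwt u = 16" "hwt v = 16" "hwt w = 16"
    "hwt (u + v) = 16" "hwt (u + w) = 16" "v \<noteq> w" "w \<noteq> u + v"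
    unfolding weight16_triple_def by blast
  have "permute2 \<sigma> u \<in> permute2 \<sigma> ` R" "permute2 \<sigma> v \<in> permute2 \<sigma> ` R"
    "permute2 \<sigma> w \<in> permute2 \<sigma> ` R" using uvw by simp_all
  with uvw show ?thesis
    unfolding weight16_triple_def
    by (simp add: hwt_permute[OF b] permute2_add[symmetric] permute2_inj[OF b]) blast
qed

lemma inequivalent_by_residue:
  assumes "weight16_triple (residue C)" and "\<not> weight16_triple (residue D)"
  shows "\<not> z4_equivalent C D"
  using assms residue_of_equivalent weight16_triple_permute by metis

section \<open>Explicit generator matrices of length 40\<close>

text \<open>The coordinates of the index type 40 are enumerated as 0, ..., 39, so that vectors
  can be given by lists and sums and counts over coordinates become list computations.\<close>
definition pos :: "40 \<Rightarrow> nat" where "pos i = nat (Rep_bit0 i)"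

lemma pos_lt: "pos i < 40"
  using Rep_bit0[of i] by (auto simp: pos_def)

lemma pos_of_nat: "m < 40 \<Longrightarrow> pos (of_nat m) = m"
  using bit0.Rep_Abs_mod[of "int m", where 'a="20"] by (simp add: pos_def bit0.of_nat_eq)

lemma inj_pos: "inj pos"
proof (rule injI)
  fix a b assume "pos a = pos b"
  then have "Rep_bit0 a = Rep_bit0 b" using Rep_bit0[of a] Rep_bit0[of b] by (simp add: pos_def eq_nat_nat_iff)
  then show "a = b" by (simp add: Rep_bit0_inject)
qed

lemma bij_pos: "bij_betw pos UNIV {..<40}"
  unfolding bij_betw_def
proof
  show "inj_on pos UNIV" using inj_pos by simp
  show "range pos = {..<40}"
  proof
    show "range pos \<subseteq> {..<40}" using pos_lt by auto
    show "{..<40} \<subseteq> range pos"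
    proof
      fix t assume "t \<in> {..<40::nat}"
      then have "pos (of_nat t) = t" by (simp add: pos_of_nat)
      then show "t \<in> range pos" by (metis rangeI)
    qed
  qed
qed

lemma sum_pos: "(\<Sum>i\<in>UNIV. f (pos i)) = (\<Sum>t<40. f t)"
  using sum.reindex_bij_betw[OF bij_pos, of f] by simp

lemma card_pos: "card {i. P (pos i)} = length (filter P [0..<40])"
proof -
  have "pos ` {i. P (pos i)} = {t. t < 40 \<and> P t}"
  proof
    show "pos ` {i. P (pos i)} \<subseteq> {t. t < 40 \<and> P t}" using pos_lt by auto
    show "{t. t < 40 \<and> P t} \<subseteq> pos ` {i. P (pos i)}"
    proof
      fix t assume t: "t \<in> {t. t < 40 \<and> P t}"
      then have "pos (of_nat t) = t" by (simp add: pos_of_nat)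
      then show "t \<in> pos ` {i. P (pos i)}" using t by (metis (mono_tags) image_eqI mem_Collect_eq)
    qed
  qed
  then have "card {i. P (pos i)} = card {t. t < 40 \<and> P t}"
    by (metis card_image inj_on_subset inj_pos subset_UNIV)
  also have "{t. t < 40 \<and> P t} = {t. t < 40 \<and> P ([0..<40] ! t)}" by auto
  also have "card \<dots> = length (filter P [0..<40])"
    by (simp add: length_filter_conv_card)
  finally show ?thesis .
qed

lemma sum_upt_list: "(\<Sum>t<n. f t) = sum_list (map f [0..<n])"
  by (induct n) auto

definition gen_row :: "int list list \<Rightarrow> nat \<Rightarrow> 4^40" where
  "gen_row G j = (\<chi> i. of_int (G ! j ! pos i))"

lemma red_gen_row: "red (gen_row G j) = (\<chi> i. of_int (G ! j ! pos i))"
  by (simp add: red_def gen_row_def red2_of_int)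

definition res_word :: "int list list \<Rightarrow> bool list \<Rightarrow> bool list" where
  "res_word G bs = map (\<lambda>t. odd (sum_list (map (\<lambda>j. if bs!j then G!j!t else 0) [0..<7]))) [0..<40]"

definition res_words :: "int list list \<Rightarrow> bool list list" where
  "res_words G = map (res_word G) (List.n_lists 7 [False,True])"

definition coeff_bits :: "(nat \<Rightarrow> 2) \<Rightarrow> bool list" where
  "coeff_bits b = map (\<lambda>j. b j = 1) [0..<7]"

definition bits :: "bool list \<Rightarrow> 2^40" where
  "bits w = (\<chi> i. if w ! pos i then 1 else 0)"

definition count_true :: "bool list \<Rightarrow> nat" where
  "count_true w = length (filter id w)"

definition xor_bits :: "bool list \<Rightarrow> bool list \<Rightarrow> bool list" where
  "xor_bits a c = map2 (\<noteq>) a c"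

lemma length_res_word[simp]: "length (res_word G bs) = 40" by (simp add: res_word_def)

lemma res_word_nth:
  "t < 40 \<Longrightarrow> res_word G bs ! t = odd (sum_list (map (\<lambda>j. if bs!j then G!j!t else 0) [0..<7]))"
  by (simp add: res_word_def cong: if_cong)

lemma comb_bits: "(\<Sum>j<7. b j *s red (gen_row G j)) = bits (res_word G (coeff_bits b))"
proof -
  have "(\<Sum>j<7. b j *s red (gen_row G j)) $ i = bits (res_word G (coeff_bits b)) $ i" for i
  proof -
    have bj: "b j * of_int z = (of_int (if b j = 1 then z else 0) :: 2)" for j z
      using z2_cases[of "b j"] by auto
    have "(\<Sum>j<7. b j *s red (gen_row G j)) $ i = (\<Sum>j<7. b j * of_int (G ! j ! pos i))"
      by (simp add: sum_component red_gen_row)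
    also have "\<dots> = of_int (\<Sum>j<7. if b j = 1 then G ! j ! pos i else 0)"
      by (simp add: bj)
    also have "(\<Sum>j<7. if b j = 1 then G ! j ! pos i else 0) =
        sum_list (map (\<lambda>j. if coeff_bits b ! j then G!j!pos i else 0) [0..<7])"
      unfolding sum_upt_list by (rule arg_cong[where f=sum_list], rule map_cong) (auto simp: coeff_bits_def)
    finally show ?thesis by (simp add: bits_def res_word_nth[OF pos_lt] of_int_2)
  qed
  then show ?thesis by (simp add: vec_eq_iff)
qed

lemma hwt_bits: "length w = 40 \<Longrightarrow> hwt (bits w) = count_true w"
proof -
  assume l: "length w = 40"
  have "hwt (bits w) = card {i. w ! pos i}" by (simp add: hwt_def bits_def)
  also have "\<dots> = length (filter (\<lambda>t. w ! t) [0..<40])" by (rule card_pos)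
  also have "\<dots> = count_true w"
  proof -
    have "length (filter (\<lambda>t. w ! t) [0..<40]) = card {i. i < 40 \<and> w ! ([0..<40] ! i)}"
      by (simp only: length_filter_conv_card length_upt diff_zero)
    also have "{i. i < 40 \<and> w ! ([0..<40] ! i)} = {i. i < 40 \<and> w ! i}" by auto
    also have "card \<dots> = length (filter id w)"
      using l by (simp add: length_filter_conv_card)
    finally show ?thesis by (simp add: count_true_def)
  qed
  finally show ?thesis .
qed

lemma bits_count0: assumes l: "length w = 40" and c: "count_true w = 0" shows "bits w = 0"
proof -
  have f: "filter id w = []" using c by (simp add: count_true_def)
  have "\<not> w ! pos i" for i
  proof -
    have "w ! pos i \<in> set w" using pos_lt[of i] l by (simp only: nth_mem)
    then show ?thesis using f by (auto simp only: filter_empty_conv id_def)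
  qed
  then show ?thesis by (simp add: bits_def vec_eq_iff)
qed

lemma bits_add: assumes l: "length a = 40" "length c = 40" shows "bits a + bits c = bits (xor_bits a c)"
proof -
  have x: "xor_bits a c ! pos i = (a ! pos i \<noteq> c ! pos i)" for i
    using pos_lt[of i] l by (simp add: xor_bits_def)
  show ?thesis unfolding vec_eq_iff
  proof
    fix i show "(bits a + bits c) $ i = bits (xor_bits a c) $ i"
      by (cases "a ! pos i"; cases "c ! pos i") (simp_all add: bits_def x)
  qed
qed

lemma bits_inj:
  "length a = 40 \<Longrightarrow> length c = 40 \<Longrightarrow> bits a = bits c \<longleftrightarrow> a = c"
proof
  assume l: "length a = 40" "length c = 40" and e: "bits a = bits c"
  show "a = c"
  proof (rule nth_equalityI)
    fix t assume "t < length a"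
    then have t: "t < 40" using l by simp
    have "bits a $ of_nat t = bits c $ of_nat t" using e by simp
    then show "a ! t = c ! t" using t by (simp add: bits_def pos_of_nat split: if_splits)
  qed (simp add: l)
qed simp

lemma length_xor_bits:
  "length a = 40 \<Longrightarrow> length c = 40 \<Longrightarrow> length (xor_bits a c) = 40"
  by (simp add: xor_bits_def)

lemma set_res_words: "set (res_words G) = res_word G ` set (List.n_lists 7 [False,True])"
  by (simp only: res_words_def set_map)

lemma length_res_words: "w \<in> set (res_words G) \<Longrightarrow> length w = 40"
  by (auto simp: set_res_words)

lemma coeff_bits_in: "coeff_bits b \<in> set (List.n_lists 7 [False,True])"
  by (simp only: set_n_lists) (auto simp add: coeff_bits_def)

lemma range_comb: "range (\<lambda>b. \<Sum>j<7. b j *s red (gen_row G j)) = bits ` set (res_words G)"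
proof
  show "range (\<lambda>b. \<Sum>j<7. b j *s red (gen_row G j)) \<subseteq> bits ` set (res_words G)"
  proof
    fix r assume "r \<in> range (\<lambda>b. \<Sum>j<7. b j *s red (gen_row G j))"
    then obtain b where r: "r = (\<Sum>j<7. b j *s red (gen_row G j))" by blast
    have "res_word G (coeff_bits b) \<in> set (res_words G)"
      unfolding set_res_words by (rule imageI[OF coeff_bits_in])
    moreover have "r = bits (res_word G (coeff_bits b))" using r by (simp only: comb_bits)
    ultimately show "r \<in> bits ` set (res_words G)" by (rule rev_image_eqI)
  qed
next
  show "bits ` set (res_words G) \<subseteq> range (\<lambda>b. \<Sum>j<7. b j *s red (gen_row G j))"
  proof
    fix r assume "r \<in> bits ` set (res_words G)"
    then obtain bs where bs: "bs \<in> set (List.n_lists 7 [False,True])" and r: "r = bits (res_word G bs)"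
      unfolding set_res_words by blast
    define b where "b j = (if bs ! j then 1 else 0 :: 2)" for j
    have l: "length bs = 7" using bs by (simp only: set_n_lists mem_Collect_eq)
    have "coeff_bits b = bs"
    proof (rule nth_equalityI)
      show "length (coeff_bits b) = length bs" using l by (simp add: coeff_bits_def)
      fix i assume "i < length (coeff_bits b)"
      then have "i < 7" by (simp add: coeff_bits_def)
      then show "coeff_bits b ! i = bs ! i" by (simp add: coeff_bits_def b_def)
    qed
    then have "r = (\<Sum>j<7. b j *s red (gen_row G j))" using r comb_bits[of b G] by simp
    then show "r \<in> range (\<lambda>b. \<Sum>j<7. b j *s red (gen_row G j))" by blast
  qed
qed

definition gen_ok :: "int list list \<Rightarrow> bool" where
 "gen_ok G \<longleftrightarrow>
   list_all (\<lambda>j. list_all (\<lambda>m. sum_list (map (\<lambda>t. G!j!t * G!m!t) [0..<40]) mod 4 = 0) [0..<7]) [0..<7] \<and>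
   list_all (\<lambda>j. sum_list (map (\<lambda>t. ((G!j!t) mod 4)^2) [0..<40]) mod 8 = 0) [0..<7] \<and>
   list_all (\<lambda>j. list_all (\<lambda>m. odd (G!j!m) = (j = m)) [0..<7]) [0..<7] \<and>
   res_word G (replicate 7 True) = replicate 40 True \<and>
   list_all (\<lambda>a. list_all (\<lambda>c. a = c \<or> list_ex (\<lambda>j. odd (G!j!a) \<noteq> odd (G!j!c)) [0..<7]) [0..<40]) [0..<40] \<and>
   length (filter (\<lambda>t. G!0!t mod 4 = 1) [0..<40]) + 4 * length (filter (\<lambda>t. G!0!t mod 4 = 2) [0..<40])
     + length (filter (\<lambda>t. G!0!t mod 4 = 3) [0..<40]) = 16"

definition weights_ok :: "int list list \<Rightarrow> bool" where
 "weights_ok G \<longleftrightarrow> list_all (\<lambda>w. count_true w = 0 \<or> 16 \<le> count_true w) (res_words G)"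

lemma gen_ok_orth: assumes c: "gen_ok G" and j: "j < (7::nat)" and m: "m < (7::nat)"
  shows "z4_inner (gen_row G j) (gen_row G m) = 0"
proof -
  have rows_orth: "\<forall>j\<in>set [0..<7]. \<forall>m\<in>set [0..<7].
      sum_list (map (\<lambda>t. G!j!t * G!m!t) [0..<40]) mod 4 = 0"
    using c unfolding gen_ok_def list_all_iff by blast
  have "j \<in> set [0..<7]" "m \<in> set [0..<7]" using j m by auto
  then have "sum_list (map (\<lambda>t. G!j!t * G!m!t) [0..<40]) mod 4 = 0"
    by (rule rows_orth[rule_format])
  then have "(4::int) dvd (\<Sum>t<40. G!j!t * G!m!t)" by (simp only: sum_upt_list dvd_eq_mod_eq_0)
  then have "(of_int (\<Sum>t<40. G!j!t * G!m!t) :: 4) = 0" by (simp only: of_int_eq_0_4)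
  moreover have "z4_inner (gen_row G j) (gen_row G m) = of_int (\<Sum>t<40. G!j!t * G!m!t)"
    using sum_pos[of "\<lambda>t. (of_int (G!j!t * G!m!t) :: 4)"]
    by (simp add: z4_inner_def gen_row_def)
  ultimately show ?thesis by simp
qed

lemma gen_ok_norm: assumes c: "gen_ok G" and j: "j < (7::nat)" shows "8 dvd norm4 (gen_row G j)"
proof -
  have rows_norm: "\<forall>j\<in>set [0..<7]. sum_list (map (\<lambda>t. ((G!j!t) mod 4)^2) [0..<40]) mod 8 = 0"
    using c unfolding gen_ok_def list_all_iff by blast
  have "j \<in> set [0..<7]" using j by auto
  then have "sum_list (map (\<lambda>t. ((G!j!t) mod 4)^2) [0..<40]) mod 8 = 0"
    by (rule rows_norm[rule_format])
  moreover have "norm4 (gen_row G j) = sum_list (map (\<lambda>t. ((G!j!t) mod 4)^2) [0..<40])"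
    using sum_pos[of "\<lambda>t. ((G!j!t) mod 4)^2"]
    by (simp add: norm4_def gen_row_def rep4_of_int sum_upt_list)
  ultimately show ?thesis by (simp add: dvd_eq_mod_eq_0)
qed

lemma gen_ok_pivots: assumes c: "gen_ok G" and j: "j < (7::nat)" and m: "m < (7::nat)"
  shows "red (gen_row G j) $ of_nat m = (if j = m then 1 else 0)"
proof -
  have rows_pivots: "\<forall>j\<in>set [0..<7]. \<forall>m\<in>set [0..<7]. odd (G!j!m) = (j = m)"
    using c unfolding gen_ok_def list_all_iff by blast
  have "j \<in> set [0..<7]" "m \<in> set [0..<7]" using j m by auto
  then have "odd (G!j!m) = (j = m)" by (rule rows_pivots[rule_format])
  then show ?thesis using m by (simp add: red_gen_row pos_of_nat of_int_2)
qed

lemma gen_ok_ones: assumes c: "gen_ok G"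
  shows "\<exists>b. (\<chi> i. 1) = (\<Sum>j<7. b j *s red (gen_row G j))"
proof -
  have rows_sum: "res_word G (replicate 7 True) = replicate 40 True"
    using c unfolding gen_ok_def by blast
  have "coeff_bits (\<lambda>_. 1) = replicate 7 True"
    unfolding coeff_bits_def by (simp only: map_replicate_const length_upt simp_thms diff_zero)
  then have "res_word G (coeff_bits (\<lambda>_. 1)) = replicate 40 True" using rows_sum by (simp only:)
  moreover have "bits (replicate 40 True) = (\<chi> i. 1)"
    unfolding bits_def vec_eq_iff by (simp only: vec_lambda_beta nth_replicate[OF pos_lt] if_True simp_thms)
  ultimately have "(\<Sum>j<7. (\<lambda>_. 1) j *s red (gen_row G j)) = (\<chi> i. 1)"
    unfolding comb_bits by (simp only:)
  then show ?thesis by (rule exI[of _ "\<lambda>_. 1", OF sym])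
qed

lemma weights_ok_weight: assumes cw: "weights_ok G"
  shows "(\<Sum>j<7. b j *s red (gen_row G j)) = 0 \<or> 16 \<le> hwt (\<Sum>j<7. b j *s red (gen_row G j))"
proof -
  let ?w = "res_word G (coeff_bits b)"
  have "?w \<in> set (res_words G)" unfolding set_res_words by (rule imageI[OF coeff_bits_in])
  then have "count_true ?w = 0 \<or> 16 \<le> count_true ?w"
    using cw unfolding weights_ok_def list_all_iff by blast
  then show ?thesis
    unfolding comb_bits using bits_count0[of ?w] hwt_bits[of ?w] by auto
qed

lemma gen_ok_columns: assumes c: "gen_ok G" and ac: "a \<noteq> c"
  shows "\<exists>j<7. red (gen_row G j) $ a \<noteq> red (gen_row G j) $ c"
proof -
  have columns: "\<forall>a\<in>set [0..<40]. \<forall>c\<in>set [0..<40].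
      a = c \<or> (\<exists>j\<in>set [0..<7]. odd (G!j!a) \<noteq> odd (G!j!c))"
    using c unfolding gen_ok_def list_all_iff list_ex_iff by blast
  have "pos a \<noteq> pos c" using ac inj_pos by (meson injD)
  have "pos a \<in> set [0..<40]" "pos c \<in> set [0..<40]" using pos_lt[of a] pos_lt[of c] by auto
  then have "pos a = pos c \<or> (\<exists>j\<in>set [0..<7]. odd (G!j!pos a) \<noteq> odd (G!j!pos c))"
    by (rule columns[rule_format])
  then have "\<exists>j\<in>set [0..<7]. odd (G!j!pos a) \<noteq> odd (G!j!pos c)"
    using \<open>pos a \<noteq> pos c\<close> by (simp only: simp_thms)
  then obtain j where j: "j \<in> set [0..<7]" and o: "odd (G!j!pos a) \<noteq> odd (G!j!pos c)" by blast
  have "j < 7" using j by simp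
  moreover have "red (gen_row G j) $ a \<noteq> red (gen_row G j) $ c"
    using o by (simp add: red_gen_row of_int_2)
  ultimately show ?thesis by blast
qed

lemma gen_ok_weight16: assumes c: "gen_ok G" shows "\<exists>j<7. eucl_weight (gen_row G j) = 16"
proof -
  have first_row: "length (filter (\<lambda>t. G!0!t mod 4 = 1) [0..<40])
     + 4 * length (filter (\<lambda>t. G!0!t mod 4 = 2) [0..<40])
     + length (filter (\<lambda>t. G!0!t mod 4 = 3) [0..<40]) = 16"
    using c unfolding gen_ok_def by blast
  have e1: "(of_int z :: 4) = 1 \<longleftrightarrow> z mod 4 = 1" for z using of_int_4_eq[of z 1] by simp
  have e2: "(of_int z :: 4) = 2 \<longleftrightarrow> z mod 4 = 2" for z using of_int_4_eq[of z 2] by simp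
  have e3: "(of_int z :: 4) = 3 \<longleftrightarrow> z mod 4 = 3" for z using of_int_4_eq[of z 3] by simp
  have "eucl_weight (gen_row G 0) = 16"
    using first_row by (simp only: eucl_weight_def gen_row_def vec_lambda_beta e1 e2 e3
       card_pos[of "\<lambda>t. G!0!t mod 4 = 1"] card_pos[of "\<lambda>t. G!0!t mod 4 = 2"]
       card_pos[of "\<lambda>t. G!0!t mod 4 = 3"])
  then show ?thesis by (intro exI[of _ 0]) simp
qed

lemma construction_from_matrix:
  assumes c: "gen_ok G" and cw: "weights_ok G" shows "z4_construction (gen_row G) 7 (\<lambda>m. of_nat m)"
  unfolding z4_construction_def
  using gen_ok_orth[OF c] gen_ok_norm[OF c] gen_ok_pivots[OF c] gen_ok_ones[OF c]
    weights_ok_weight[OF cw] gen_ok_columns[OF c] gen_ok_weight16[OF c] by blast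

definition res_words16 :: "int list list \<Rightarrow> bool list list" where
  "res_words16 G = filter (\<lambda>w. count_true w = 16) (res_words G)"

definition no_weight16_triple :: "int list list \<Rightarrow> bool" where
  "no_weight16_triple G = (let L = res_words16 G in list_all (\<lambda>a. list_all (\<lambda>b. list_all (\<lambda>c.
      (count_true (xor_bits a b) = 16 \<and> count_true (xor_bits a c) = 16) \<longrightarrow> b = c \<or> c = xor_bits a b) L) L) L)"

lemma no_weight16_triple_sound:
  assumes c: "no_weight16_triple G" shows "\<not> weight16_triple (bits ` set (res_words G))"
proof
  assume "weight16_triple (bits ` set (res_words G))"
  then obtain a b d where ab: "a \<in> set (res_words G)" "b \<in> set (res_words G)" "d \<in> set (res_words G)"
    and P: "hwt (bits a) = 16" "hwt (bits b) = 16" "hwt (bits d) = 16"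
      "hwt (bits a + bits b) = 16" "hwt (bits a + bits d) = 16" "bits b \<noteq> bits d"
      "bits d \<noteq> bits a + bits b"
    unfolding weight16_triple_def by blast
  have L: "length a = 40" "length b = 40" "length d = 40" using ab length_res_words by auto
  have cnts: "count_true a = 16" "count_true b = 16" "count_true d = 16"
    "count_true (xor_bits a b) = 16" "count_true (xor_bits a d) = 16"
    using P L by (simp_all add: hwt_bits bits_add length_xor_bits)
  have inW: "a \<in> set (res_words16 G)" "b \<in> set (res_words16 G)" "d \<in> set (res_words16 G)"
    using ab cnts by (simp_all add: res_words16_def)
  have "b = d \<or> d = xor_bits a b"
    using c inW cnts unfolding no_weight16_triple_def Let_def list_all_iff by blast
  then show False using P L by (auto simp: bits_add)
qed

section \<open>The two codes\<close>

definition G1 :: "int list list" where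
 "G1 = [[1,0,0,0,0,0,0,1,0,1,1,0,0,0,1,1,0,1,0,1,1,0,0,1,0,1,1,0,1,0,0,0,1,0,1,0,0,0,0,1],
  [0,1,0,0,0,0,0,0,1,3,0,1,0,1,1,0,1,1,1,1,1,0,1,0,0,1,1,1,1,1,1,0,0,1,1,1,1,1,0,1],
  [0,0,1,0,0,0,0,3,1,1,1,1,1,1,0,0,0,0,0,0,0,0,0,0,0,0,0,0,0,0,0,0,1,1,1,1,1,1,1,1],
  [0,0,0,1,0,0,0,3,0,0,1,3,0,0,0,0,1,1,0,0,1,1,1,0,0,0,1,1,0,0,1,1,1,1,0,0,1,0,0,0],
  [0,0,0,0,1,0,0,0,0,3,0,1,0,0,3,3,1,0,0,1,0,1,1,0,1,0,1,0,0,1,0,0,1,0,0,1,0,1,1,0],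
  [0,0,0,0,0,1,0,1,1,3,0,3,1,0,0,1,1,1,1,1,0,1,0,1,1,0,1,1,1,1,0,1,1,0,1,1,1,0,1,0],
  [0,0,0,0,0,0,1,1,0,0,0,0,3,3,0,0,1,1,1,1,0,0,0,3,1,1,0,0,0,0,1,1,0,0,1,1,1,0,0,0]]"

definition G2 :: "int list list" where
 "G2 = [[1,0,0,0,0,0,0,1,0,1,0,1,1,1,0,0,0,1,0,0,1,0,0,0,1,0,0,1,0,0,1,0,0,1,0,1,1,1,0,1],
  [0,1,0,0,0,0,0,0,1,3,1,1,1,0,0,0,1,1,1,1,1,1,0,1,1,1,0,0,0,1,1,1,1,1,1,1,0,0,1,1],
  [0,0,1,0,0,0,0,3,0,0,1,1,0,0,0,1,0,0,1,0,0,1,0,1,1,0,1,0,0,1,1,0,1,1,0,0,0,0,1,1],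
  [0,0,0,1,0,0,0,3,0,3,0,3,1,1,1,1,1,0,1,1,0,1,1,1,0,1,1,0,1,1,0,1,0,1,0,1,1,1,0,1],
  [0,0,0,0,1,0,0,0,0,3,3,0,1,1,1,0,1,0,0,1,0,0,1,1,0,0,1,1,0,1,0,0,0,1,1,0,0,0,0,1],
  [0,0,0,0,0,1,0,0,3,3,0,0,0,0,0,3,0,0,1,3,1,0,1,0,0,3,0,1,1,1,1,0,1,1,0,0,0,1,0,0],
  [0,0,0,0,0,0,1,0,3,0,0,3,1,0,3,0,0,1,1,1,0,0,0,1,0,0,0,0,1,0,1,1,0,1,1,0,1,0,1,0]]"

lemma gen_ok_G1: "gen_ok G1" by code_simp

lemma gen_ok_G2: "gen_ok G2" by code_simp

lemma weights_ok_G1: "weights_ok G1" by code_simp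

lemma weights_ok_G2: "weights_ok G2" by code_simp

definition tu :: "bool list" where "tu = [False, False, False, False, True, True, True]"

definition tv :: "bool list" where "tv = [False, False, False, False, False, False, True]"

definition tw :: "bool list" where "tw = [False, False, False, False, False, True, True]"

lemma G1_triple_words:
  "count_true (res_word G1 tu) = 16 \<and> count_true (res_word G1 tv) = 16 \<and>
   count_true (res_word G1 tw) = 16 \<and>
   count_true (xor_bits (res_word G1 tu) (res_word G1 tv)) = 16 \<and>
   count_true (xor_bits (res_word G1 tu) (res_word G1 tw)) = 16 \<and>
   res_word G1 tv \<noteq> res_word G1 tw \<and> res_word G1 tw \<noteq> xor_bits (res_word G1 tu) (res_word G1 tv)"
  by code_simp

lemma weight16_triple_G1: "weight16_triple (bits ` set (res_words G1))"
proof -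
  have inw: "res_word G1 bs \<in> set (res_words G1)" if "length bs = 7" for bs
    unfolding set_res_words using that by (intro imageI) (auto simp: set_n_lists)
  have l: "length tu = 7" "length tv = 7" "length tw = 7" by (simp_all add: tu_def tv_def tw_def)
  let ?u = "res_word G1 tu" and ?v = "res_word G1 tv" and ?w = "res_word G1 tw"
  have L: "length ?u = 40" "length ?v = 40" "length ?w = 40" by simp_all
  have "hwt (bits ?u) = 16 \<and> hwt (bits ?v) = 16 \<and> hwt (bits ?w) = 16 \<and>
      hwt (bits ?u + bits ?v) = 16 \<and> hwt (bits ?u + bits ?w) = 16 \<and>
      bits ?v \<noteq> bits ?w \<and> bits ?w \<noteq> bits ?u + bits ?v"
    using G1_triple_words L by (simp add: bits_add hwt_bits bits_inj length_xor_bits)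
  moreover have "bits ?u \<in> bits ` set (res_words G1)" "bits ?v \<in> bits ` set (res_words G1)"
    "bits ?w \<in> bits ` set (res_words G1)" using inw[OF l(1)] inw[OF l(2)] inw[OF l(3)] by simp_all
  ultimately show ?thesis unfolding weight16_triple_def by blast
qed

lemma no_weight16_triple_G2: "no_weight16_triple G2" by code_simp

interpretation code1: z4_construction "gen_row G1" 7 "\<lambda>m. of_nat m"
  by (rule construction_from_matrix[OF gen_ok_G1 weights_ok_G1])

interpretation code2: z4_construction "gen_row G2" 7 "\<lambda>m. of_nat m"
  by (rule construction_from_matrix[OF gen_ok_G2 weights_ok_G2])

lemma Res_G1: "code1.Res = bits ` set (res_words G1)"
  unfolding code1.Res_def code1.comb_def code1.gen_res_def by (rule range_comb)

lemma Res_G2: "code2.Res = bits ` set (res_words G2)"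
  unfolding code2.Res_def code2.comb_def code2.gen_res_def by (rule range_comb)

theorem mainTheorem11:
  shows "\<exists>C D :: (4^40) set. extremal_type_II C \<and> extremal_type_II D \<and>
           binary_dim (residue C) = 7 \<and> binary_dim (residue D) = 7 \<and>
           \<not> z4_equivalent C D"
proof (intro exI conjI)
  show "extremal_type_II code1.Code" by (rule code1.extremal_Code) simp_all
  show "extremal_type_II code2.Code" by (rule code2.extremal_Code) simp_all
  show "binary_dim (residue code1.Code) = 7" by (rule code1.dim_residue_Code)
  show "binary_dim (residue code2.Code) = 7" by (rule code2.dim_residue_Code)
  show "\<not> z4_equivalent code1.Code code2.Code"
  proof (rule inequivalent_by_residue)
    show "weight16_triple (residue code1.Code)"
      using weight16_triple_G1 by (simp add: code1.residue_Code Res_G1)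
    show "\<not> weight16_triple (residue code2.Code)"
      using no_weight16_triple_sound[OF no_weight16_triple_G2] by (simp add: code2.residue_Code Res_G2)
  qed
qed

end
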